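(* Fix a nonnegative integer $n$ and define \[ R_n(a,b,c)=(1-a)_n(b)_n\,{}_4F_3\!\left(\left.{-n,a,a-c-n,c \atop \frac{a-n}{2},\frac{1+a-n}{2},b}\right| \frac{1}{4}\right). \] The group of transformations of $(a,b,c)$ generated by $(a,b,c)\mapsto(a,b,a-c-n)$ and $(a,b,c)\mapsto(1+c-b,1+c-a,c)$, both of which leave $R_n$ invariant, is isomorphic to $S_3$, and yields the six invariances (valid whenever both sides are defined) \begin{align*} R_n(a,b,c)&=R_n(a,b,c)=R_n(a,b,a-c-n)=R_n(1+c-b,1+c-a,c)=R_n(1+c-b,1+c-a,1-b-n)\\ &=R_n(1+a-b-c-n,1-c-n,a-c-n)=R_n(1+a-b-c-n,1-c-n,1-b-n). \end{align*} Moreover the function \[ V_n(x,y,z)=R_n\!\left(x-y-z,\ \frac{2+3x-y-z-n}{2},\ \frac{x+y-3z-n}{2}\right) \] is invariant under all six permutations of $x,y,z$.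
   Context: For $a\in\mathbb{C}$, $(a)_0=1$ and $(a)_k=a(a+1)\cdots(a+k-1)$ for $k\ge1$. The hypergeometric series is ${}_rF_s\!\left(\left.{\alpha_1,\ldots,\alpha_r\atop \beta_1,\ldots,\beta_s}\right|z\right)=\sum_{k\ge0}\frac{(\alpha_1)_k\cdots(\alpha_r)_k}{k!(\beta_1)_k\cdots(\beta_s)_k}z^k$, with no lower parameter zero or a negative integer; when an upper parameter is $-n$ it is a finite sum over $0\le k\le n$. *)

theory Defs
  imports Complex_Main "HOL-Library.Nonpos_Ints" "HOL-Algebra.Sym_Groups"
    "HOL-Algebra.Bij" "HOL-Algebra.Generated_Groups"
begin

text \<open>Terminating 4F3 series with first upper parameter -n: the series
  sum_k (-n)_k (a2)_k (a3)_k (a4)_k / (k! (b1)_k (b2)_k (b3)_k) z^k,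
  which is a finite sum over 0 <= k <= n (all later terms vanish).\<close>
definition F43_term :: "nat \<Rightarrow> complex \<Rightarrow> complex \<Rightarrow> complex \<Rightarrow> complex \<Rightarrow> complex \<Rightarrow> complex \<Rightarrow> complex \<Rightarrow> complex" where
  "F43_term n a2 a3 a4 b1 b2 b3 z =
     (\<Sum>k\<le>n. pochhammer (- of_nat n) k * pochhammer a2 k * pochhammer a3 k * pochhammer a4 k
             / (fact k * pochhammer b1 k * pochhammer b2 k * pochhammer b3 k) * z ^ k)"

definition R :: "nat \<Rightarrow> complex \<Rightarrow> complex \<Rightarrow> complex \<Rightarrow> complex" where
  "R n a b c = pochhammer (1 - a) n * pochhammer b n *
     F43_term n a (a - c - of_nat n) c ((a - of_nat n) / 2) ((1 + a - of_nat n) / 2) b (1/4)"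

definition R_defined :: "nat \<Rightarrow> complex \<Rightarrow> complex \<Rightarrow> complex \<Rightarrow> bool" where
  "R_defined n a b c \<longleftrightarrow>
     (a - of_nat n) / 2 \<notin> \<int>\<^sub>\<le>\<^sub>0 \<and> (1 + a - of_nat n) / 2 \<notin> \<int>\<^sub>\<le>\<^sub>0 \<and> b \<notin> \<int>\<^sub>\<le>\<^sub>0"

definition T1 :: "nat \<Rightarrow> complex \<times> complex \<times> complex \<Rightarrow> complex \<times> complex \<times> complex" where
  "T1 n = (\<lambda>(a, b, c). (a, b, a - c - of_nat n))"

definition T2 :: "complex \<times> complex \<times> complex \<Rightarrow> complex \<times> complex \<times> complex" where
  "T2 = (\<lambda>(a, b, c). (1 + c - b, 1 + c - a, c))"

definition Tgroup :: "nat \<Rightarrow> (complex \<times> complex \<times> complex \<Rightarrow> complex \<times> complex \<times> complex) monoid" where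
  "Tgroup n = (BijGroup UNIV) \<lparr> carrier := generate (BijGroup UNIV) {T1 n, T2} \<rparr>"

definition V_args :: "nat \<Rightarrow> complex \<Rightarrow> complex \<Rightarrow> complex \<Rightarrow> complex \<times> complex \<times> complex" where
  "V_args n x y z = (x - y - z, (2 + 3*x - y - z - of_nat n) / 2, (x + y - 3*z - of_nat n) / 2)"

definition V :: "nat \<Rightarrow> complex \<Rightarrow> complex \<Rightarrow> complex \<Rightarrow> complex" where
  "V n x y z = (case V_args n x y z of (a, b, c) \<Rightarrow> R n a b c)"

definition V_defined :: "nat \<Rightarrow> complex \<Rightarrow> complex \<Rightarrow> complex \<Rightarrow> bool" where
  "V_defined n x y z = (case V_args n x y z of (a, b, c) \<Rightarrow> R_defined n a b c)"

end

theory Submission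
  imports Defs
begin

(* Clearing the denominators of the 4F3 with the duplication formula
   (z)_2k = 4^k (z/2)_k ((z+1)/2)_k shows that, wherever R_n is defined,
     R_n(a,b,c) = (-1)^n W_n(c, a-n-c, b),
     W_n(alpha,beta,delta) = sum_k C(n,k) (-1)^k (alpha)_k (beta)_k (alpha+beta+2k)_(n-k) (delta+k)_(n-k).
   W_n is visibly symmetric in alpha and beta; this is the invariance under T1.
   Expanding (alpha+beta+2k)_(n-k) = ((alpha+k)+(beta+k))_(n-k) by Chu-Vandermonde turns W_n
   into a double sum over k + j <= n in which the reflection
   (beta, delta) -> (1-n-delta, 1-n-beta), i.e. the invariance under T2, becomes the swap k <-> j.

   The affine change of variables (x,y,z) -> (a,b,c) in the definition of V conjugates T1 and T2
   to the coordinate transpositions (y z) and (x y). Hence V is symmetric, and the group generated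
   by T1 and T2 is the image of S_3 under a faithful action by permutation of coordinates. *)

lemma pochhammer_reflect:
  fixes z :: "'a::comm_ring_1"
  shows "pochhammer (1 - z - of_nat m) m = (-1)^m * pochhammer z m"
  using pochhammer_minus[of "z + of_nat m - 1" m] by (simp add: algebra_simps)

lemma pochhammer_neg_of_nat:
  "pochhammer (- of_nat n :: 'a::field_char_0) k = (-1)^k * of_nat (n choose k) * fact k"
  by (simp add: binomial_gbinomial gbinomial_pochhammer)

lemma pochhammer_double_halves:
  fixes z :: "'a::field_char_0"
  shows "pochhammer z (2 * k) = 4^k * pochhammer (z / 2) k * pochhammer ((z + 1) / 2) k"
  using pochhammer_double[of "z / 2" k] by (simp add: power_mult add_divide_distrib)

lemma pochhammer_neq_0_if_notin_nonpos_Ints: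
  "z \<notin> \<int>\<^sub>\<le>\<^sub>0 \<Longrightarrow> pochhammer (z :: 'a::field_char_0) k \<noteq> 0"
  by (auto simp: pochhammer_eq_0_iff)

lemma choose_mult_swap:
  assumes "k + j \<le> n"
  shows "(n choose k) * ((n - k) choose j) = (n choose j) * ((n - j) choose k)"
proof -
  have "(n choose k) * ((n - k) choose j) = (n choose (k + j)) * ((k + j) choose k)"
    using choose_mult[of k "k + j" n] assms by simp
  also have "((k + j) choose k) = ((j + k) choose j)"
    using binomial_symmetric[of k "k + j"] by (simp add: add.commute)
  also have "(n choose (k + j)) * \<dots> = (n choose j) * ((n - j) choose k)"
    using choose_mult[of j "j + k" n] assms by (simp add: add.commute)
  finally show ?thesis .
qed

definition W :: "nat \<Rightarrow> complex \<Rightarrow> complex \<Rightarrow> complex \<Rightarrow> complex" where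
  "W n \<alpha> \<beta> \<delta> = (\<Sum>k\<le>n. of_nat (n choose k) * (-1)^k * pochhammer \<alpha> k * pochhammer \<beta> k *
      pochhammer (\<alpha> + \<beta> + 2 * of_nat k) (n - k) * pochhammer (\<delta> + of_nat k) (n - k))"

lemma pochhammer_binomial_sum_shifted:
  fixes \<alpha> \<beta> :: "'a::comm_ring_1"
  assumes "k \<le> n"
  shows "(\<Sum>j\<le>n - k. of_nat ((n - k) choose j) * pochhammer \<alpha> (k + j) * pochhammer \<beta> (n - j)) =
    pochhammer \<alpha> k * pochhammer \<beta> k * pochhammer (\<alpha> + \<beta> + 2 * of_nat k) (n - k)"
proof -
  have "(\<Sum>j\<le>n - k. of_nat ((n - k) choose j) * pochhammer \<alpha> (k + j) * pochhammer \<beta> (n - j)) =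
      (\<Sum>j\<le>n - k. pochhammer \<alpha> k * pochhammer \<beta> k *
        (of_nat ((n - k) choose j) * pochhammer (\<alpha> + of_nat k) j * pochhammer (\<beta> + of_nat k) (n - k - j)))"
  proof (rule sum.cong[OF refl])
    fix j assume "j \<in> {..n - k}"
    then have "pochhammer \<beta> (n - j) = pochhammer \<beta> k * pochhammer (\<beta> + of_nat k) (n - k - j)"
      using assms pochhammer_product'[of \<beta> k "n - k - j"] by simp
    then show "of_nat ((n - k) choose j) * pochhammer \<alpha> (k + j) * pochhammer \<beta> (n - j) =
        pochhammer \<alpha> k * pochhammer \<beta> k *
        (of_nat ((n - k) choose j) * pochhammer (\<alpha> + of_nat k) j * pochhammer (\<beta> + of_nat k) (n - k - j))"
      unfolding pochhammer_product' by (simp only: mult_ac)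
  qed
  also have "\<dots> = pochhammer \<alpha> k * pochhammer \<beta> k * pochhammer (\<alpha> + \<beta> + 2 * of_nat k) (n - k)"
    using pochhammer_binomial_sum[of "\<alpha> + of_nat k" "\<beta> + of_nat k" "n - k"]
    by (simp add: sum_distrib_left[symmetric] algebra_simps)
  finally show ?thesis .
qed

definition W_double :: "nat \<Rightarrow> complex \<Rightarrow> complex \<Rightarrow> complex \<Rightarrow> complex" where
  "W_double n \<alpha> \<beta> \<delta> = (\<Sum>(k, j) \<in> {(k, j). k + j \<le> n}.
      of_nat (n choose k) * (-1)^k * pochhammer (\<delta> + of_nat k) (n - k) *
      (of_nat ((n - k) choose j) * pochhammer \<alpha> (k + j) * pochhammer \<beta> (n - j)))"

lemma W_eq_W_double: "W n \<alpha> \<beta> \<delta> = W_double n \<alpha> \<beta> \<delta>"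
proof -
  have "W_double n \<alpha> \<beta> \<delta> = (\<Sum>k\<le>n. of_nat (n choose k) * (-1)^k * pochhammer (\<delta> + of_nat k) (n - k) *
      (\<Sum>j\<le>n - k. of_nat ((n - k) choose j) * pochhammer \<alpha> (k + j) * pochhammer \<beta> (n - j)))"
    unfolding W_double_def sum_distrib_left
    by (subst sum.Sigma) (auto intro!: sum.cong simp: Sigma_def)
  also have "\<dots> = W n \<alpha> \<beta> \<delta>"
    unfolding W_def
  proof (rule sum.cong[OF refl])
    fix k assume "k \<in> {..n}"
    then have "k \<le> n" by simp
    show "of_nat (n choose k) * (-1)^k * pochhammer (\<delta> + of_nat k) (n - k) *
        (\<Sum>j\<le>n - k. of_nat ((n - k) choose j) * pochhammer \<alpha> (k + j) * pochhammer \<beta> (n - j)) =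
      of_nat (n choose k) * (-1)^k * pochhammer \<alpha> k * pochhammer \<beta> k *
        pochhammer (\<alpha> + \<beta> + 2 * of_nat k) (n - k) * pochhammer (\<delta> + of_nat k) (n - k)"
      unfolding pochhammer_binomial_sum_shifted[OF \<open>k \<le> n\<close>] by (simp only: mult_ac)
  qed
  finally show ?thesis ..
qed

lemma W_double_reflect:
  "W_double n \<alpha> \<beta> \<delta> = W_double n \<alpha> (1 - of_nat n - \<delta>) (1 - of_nat n - \<beta>)"
proof -
  have swapped_term:
    "of_nat (n choose j) * (-1)^j * pochhammer (1 - of_nat n - \<beta> + of_nat j) (n - j) *
       (of_nat ((n - j) choose k) * pochhammer \<alpha> (j + k) * pochhammer (1 - of_nat n - \<delta>) (n - k)) =
     of_nat (n choose k) * (-1)^k * pochhammer (\<delta> + of_nat k) (n - k) *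
       (of_nat ((n - k) choose j) * pochhammer \<alpha> (k + j) * pochhammer \<beta> (n - j))"
    if kj: "k + j \<le> n" for k j
  proof -
    have reflect_\<delta>: "pochhammer (1 - of_nat n - \<delta>) (n - k) =
        (-1)^(n - k) * pochhammer (\<delta> + of_nat k) (n - k)"
      using pochhammer_reflect[of "\<delta> + of_nat k" "n - k"] kj by (simp add: of_nat_diff algebra_simps)
    have reflect_\<beta>: "pochhammer (1 - of_nat n - \<beta> + of_nat j) (n - j) = (-1)^(n - j) * pochhammer \<beta> (n - j)"
      using pochhammer_reflect[of \<beta> "n - j"] kj by (simp add: of_nat_diff algebra_simps)
    have sign: "(-1::complex)^j * (-1)^(n - k) * (-1)^(n - j) = (-1)^k"
    proof -
      have "(-1::complex)^j * (-1)^(n - k) * (-1)^(n - j) = (-1)^(j + (n - k) + (n - j))"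
        by (simp add: power_add)
      also have "j + (n - k) + (n - j) = k + 2 * (n - k)"
        using kj by simp
      finally show ?thesis by (simp add: power_add power_mult)
    qed
    have binomials: "of_nat (n choose j) * of_nat ((n - j) choose k) =
        (of_nat (n choose k) * of_nat ((n - k) choose j) :: complex)"
      using choose_mult_swap[OF kj] by (metis of_nat_mult)
    have "of_nat (n choose j) * (-1)^j * pochhammer (1 - of_nat n - \<beta> + of_nat j) (n - j) *
       (of_nat ((n - j) choose k) * pochhammer \<alpha> (j + k) * pochhammer (1 - of_nat n - \<delta>) (n - k)) =
      (of_nat (n choose j) * of_nat ((n - j) choose k)) * ((-1)^j * (-1)^(n - k) * (-1)^(n - j)) *
       (pochhammer \<alpha> (k + j) * pochhammer \<beta> (n - j) * pochhammer (\<delta> + of_nat k) (n - k))"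
      unfolding reflect_\<delta> reflect_\<beta> add.commute[of j k] by (simp only: mult_ac)
    then show ?thesis
      unfolding binomials sign by (simp only: mult_ac)
  qed
  have "W_double n \<alpha> (1 - of_nat n - \<delta>) (1 - of_nat n - \<beta>) =
    (\<Sum>(k, j) \<in> {(k, j). k + j \<le> n}.
      of_nat (n choose j) * (-1)^j * pochhammer (1 - of_nat n - \<beta> + of_nat j) (n - j) *
      (of_nat ((n - j) choose k) * pochhammer \<alpha> (j + k) * pochhammer (1 - of_nat n - \<delta>) (n - k)))"
    unfolding W_double_def
    by (rule sum.reindex_bij_witness[where i = prod.swap and j = prod.swap]) auto
  also have "\<dots> = W_double n \<alpha> \<beta> \<delta>"
    unfolding W_double_def by (rule sum.cong) (auto simp: swapped_term)
  finally show ?thesis ..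
qed

lemma W_swap: "W n \<alpha> \<beta> \<delta> = W n \<beta> \<alpha> \<delta>"
  unfolding W_def by (simp add: ac_simps)

lemma W_reflect: "W n \<alpha> \<beta> \<delta> = W n \<alpha> (1 - of_nat n - \<delta>) (1 - of_nat n - \<beta>)"
  unfolding W_eq_W_double by (rule W_double_reflect)

definition R_poly :: "nat \<Rightarrow> complex \<Rightarrow> complex \<Rightarrow> complex \<Rightarrow> complex" where
  "R_poly n a b c = (-1)^n * W n c (a - of_nat n - c) b"

lemma R_poly_T1: "R_poly n a b (a - c - of_nat n) = R_poly n a b c"
  unfolding R_poly_def by (subst W_swap) (simp add: algebra_simps)

lemma R_poly_T2: "R_poly n (1 + c - b) (1 + c - a) c = R_poly n a b c"
  unfolding R_poly_def using W_reflect[of n c "a - of_nat n - c" b] by (simp add: algebra_simps)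

lemma R_poly_invariances:
  "R_poly n a b (a - c - of_nat n) = R_poly n a b c"
  "R_poly n (1 + c - b) (1 + c - a) c = R_poly n a b c"
  "R_poly n (1 + c - b) (1 + c - a) (1 - b - of_nat n) = R_poly n a b c"
  "R_poly n (1 + a - b - c - of_nat n) (1 - c - of_nat n) (a - c - of_nat n) = R_poly n a b c"
  "R_poly n (1 + a - b - c - of_nat n) (1 - c - of_nat n) (1 - b - of_nat n) = R_poly n a b c"
proof -
  show T1: "R_poly n a b (a - c - of_nat n) = R_poly n a b c"
    by (rule R_poly_T1)
  show T2: "R_poly n (1 + c - b) (1 + c - a) c = R_poly n a b c"
    by (rule R_poly_T2)
  have "1 - b - of_nat n = (1 + c - b) - c - of_nat n"
    by simp
  then show "R_poly n (1 + c - b) (1 + c - a) (1 - b - of_nat n) = R_poly n a b c"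
    by (simp only: R_poly_T1 T2)
  have "1 + a - b - c - of_nat n = 1 + (a - c - of_nat n) - b" "1 - c - of_nat n = 1 + (a - c - of_nat n) - a"
    by simp_all
  then show T2T1: "R_poly n (1 + a - b - c - of_nat n) (1 - c - of_nat n) (a - c - of_nat n) = R_poly n a b c"
    by (simp only: R_poly_T2 T1)
  have "1 - b - of_nat n = (1 + a - b - c - of_nat n) - (a - c - of_nat n) - of_nat n"
    by simp
  then show "R_poly n (1 + a - b - c - of_nat n) (1 - c - of_nat n) (1 - b - of_nat n) = R_poly n a b c"
    by (simp only: R_poly_T1 T2T1)
qed

lemma R_summand_cleared:
  fixes a b c :: complex
  assumes k: "k \<le> n"
    and half_nonzero: "pochhammer ((a - of_nat n) / 2) k * pochhammer ((1 + a - of_nat n) / 2) k \<noteq> 0"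
    and b_nonzero: "pochhammer b k \<noteq> 0"
  shows "pochhammer (1 - a) n * pochhammer b n *
      (pochhammer (- of_nat n) k * pochhammer a k * pochhammer (a - c - of_nat n) k * pochhammer c k /
        (fact k * pochhammer ((a - of_nat n) / 2) k * pochhammer ((1 + a - of_nat n) / 2) k * pochhammer b k) *
        (1 / 4) ^ k) =
    (-1)^n * (of_nat (n choose k) * (-1)^k * pochhammer c k * pochhammer (a - of_nat n - c) k *
      pochhammer (c + (a - of_nat n - c) + 2 * of_nat k) (n - k) * pochhammer (b + of_nat k) (n - k))"
    (is "?lhs = _")
proof -
  define A where "A = a - of_nat n"
  have args: "a - of_nat n = A" "1 + a - of_nat n = A + 1" "a - c - of_nat n = A - c"
    by (simp_all add: A_def)
  have "pochhammer (1 - a) n * pochhammer a k = (-1)^n * pochhammer A (n + k)"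
    using pochhammer_reflect[of A n] pochhammer_product'[of A n k] by (simp add: A_def)
  also have "n + k = 2 * k + (n - k)"
    using k by simp
  finally have a_factors: "pochhammer (1 - a) n * pochhammer a k =
      (-1)^n * (4^k * pochhammer (A / 2) k * pochhammer ((A + 1) / 2) k) * pochhammer (A + 2 * of_nat k) (n - k)"
    by (simp add: pochhammer_product' pochhammer_double_halves)
  have b_quotient: "pochhammer b n / pochhammer b k = pochhammer (b + of_nat k) (n - k)"
    using pochhammer_product'[of b k "n - k"] k b_nonzero by simp
  have binomial: "pochhammer (- of_nat n) k / fact k = (-1)^k * (of_nat (n choose k) :: complex)"
    by (simp add: pochhammer_neg_of_nat)
  have "?lhs = (pochhammer (1 - a) n * pochhammer a k) * (pochhammer b n / pochhammer b k) *
      (pochhammer (- of_nat n) k / fact k) * pochhammer (A - c) k * pochhammer c k /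
      (4^k * pochhammer (A / 2) k * pochhammer ((A + 1) / 2) k)"
    unfolding args using b_nonzero by (simp add: field_simps power_one_over)
  also have "\<dots> = (-1)^n * (of_nat (n choose k) * (-1)^k * pochhammer c k * pochhammer (A - c) k *
      pochhammer (A + 2 * of_nat k) (n - k) * pochhammer (b + of_nat k) (n - k))"
    unfolding a_factors b_quotient binomial using half_nonzero unfolding args by (simp add: field_simps)
  finally show ?thesis
    by (simp add: A_def)
qed

lemma R_eq_R_poly:
  assumes "R_defined n a b c"
  shows "R n a b c = R_poly n a b c"
proof -
  have "pochhammer ((a - of_nat n) / 2) k * pochhammer ((1 + a - of_nat n) / 2) k \<noteq> 0"
    and "pochhammer b k \<noteq> 0" for k
    using assms by (simp_all add: R_defined_def pochhammer_neq_0_if_notin_nonpos_Ints)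
  then show ?thesis
    unfolding R_def F43_term_def R_poly_def W_def sum_distrib_left
    by (intro sum.cong refl R_summand_cleared) simp_all
qed

lemma R_invariances:
  "\<forall>a b c. R_defined n a b c \<longrightarrow>
    (R_defined n a b (a - c - of_nat n) \<longrightarrow>
       R n a b c = R n a b (a - c - of_nat n)) \<and>
    (R_defined n (1 + c - b) (1 + c - a) c \<longrightarrow>
       R n a b c = R n (1 + c - b) (1 + c - a) c) \<and>
    (R_defined n (1 + c - b) (1 + c - a) (1 - b - of_nat n) \<longrightarrow>
       R n a b c = R n (1 + c - b) (1 + c - a) (1 - b - of_nat n)) \<and>
    (R_defined n (1 + a - b - c - of_nat n) (1 - c - of_nat n) (a - c - of_nat n) \<longrightarrow>
       R n a b c = R n (1 + a - b - c - of_nat n) (1 - c - of_nat n) (a - c - of_nat n)) \<and>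
    (R_defined n (1 + a - b - c - of_nat n) (1 - c - of_nat n) (1 - b - of_nat n) \<longrightarrow>
       R n a b c = R n (1 + a - b - c - of_nat n) (1 - c - of_nat n) (1 - b - of_nat n))"
  by (simp add: R_eq_R_poly R_poly_invariances)

lemma T1_V_args: "T1 n (V_args n x y z) = V_args n x z y"
  by (simp add: T1_def V_args_def field_simps)

lemma T2_V_args: "T2 (V_args n x y z) = V_args n y x z"
  by (simp add: T2_def V_args_def field_simps)

definition V_poly :: "nat \<Rightarrow> complex \<Rightarrow> complex \<Rightarrow> complex \<Rightarrow> complex" where
  "V_poly n x y z = (case V_args n x y z of (a, b, c) \<Rightarrow> R_poly n a b c)"

lemma V_poly_swap_yz: "V_poly n x z y = V_poly n x y z"
  unfolding V_poly_def T1_V_args[of n x y z, symmetric] by (simp add: T1_def R_poly_T1 split: prod.split)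

lemma V_poly_swap_xy: "V_poly n y x z = V_poly n x y z"
  unfolding V_poly_def T2_V_args[of n x y z, symmetric] by (simp add: T2_def R_poly_T2 split: prod.split)

lemma V_eq_V_poly: "V_defined n x y z \<Longrightarrow> V n x y z = V_poly n x y z"
  by (auto simp: V_defined_def V_def V_poly_def R_eq_R_poly split: prod.split)

lemma V_symmetric:
  "\<forall>x y z. V_defined n x y z \<longrightarrow>
    (V_defined n y x z \<longrightarrow> V n x y z = V n y x z) \<and>
    (V_defined n x z y \<longrightarrow> V n x y z = V n x z y) \<and>
    (V_defined n z y x \<longrightarrow> V n x y z = V n z y x) \<and>
    (V_defined n y z x \<longrightarrow> V n x y z = V n y z x) \<and>
    (V_defined n z x y \<longrightarrow> V n x y z = V n z x y)"
  by (auto simp: V_eq_V_poly) (metis V_poly_swap_xy V_poly_swap_yz)+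

lemma BijGroup_UNIV [simp]:
  "carrier (BijGroup UNIV) = Collect bij"
  "bij f \<Longrightarrow> bij g \<Longrightarrow> f \<otimes>\<^bsub>BijGroup UNIV\<^esub> g = f \<circ> g"
  by (auto simp: BijGroup_def Bij_def compose_def fun_eq_iff)

lemma iso_generate_image:
  assumes G: "group G" and H: "group H"
    and h: "h \<in> hom G H" "inj_on h (carrier G)"
    and S: "S \<subseteq> carrier G" "generate G S = carrier G"
  shows "H\<lparr>carrier := generate H (h ` S)\<rparr> \<cong> G"
proof -
  interpret group_hom G H h
    using G H h by (simp add: group_hom_def group_hom_axioms_def)
  have "generate H (h ` S) = h ` carrier G"
    using generate_img[OF S(1)] S(2) by simp
  moreover have "h \<in> iso G (H\<lparr>carrier := h ` carrier G\<rparr>)"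
    using h by (auto simp: iso_def hom_def inj_on_imp_bij_betw)
  ultimately show ?thesis
    using G by (simp add: group.iso_sym is_isoI)
qed

lemma sym_group_3_generated_by_transpositions:
  "generate (sym_group 3) {transpose 1 2, transpose 2 3} = carrier (sym_group 3)"
proof
  interpret group "sym_group 3" by (rule sym_group_is_group)
  let ?T = "generate (sym_group 3) {transpose 1 2, transpose 2 3}"
  have "{transpose 1 2, transpose 2 3} \<subseteq> carrier (sym_group 3)"
    by (auto simp: sym_group_carrier permutes_swap_id)
  then show "?T \<subseteq> carrier (sym_group 3)"
    using generate_in_carrier by blast
  have closed: "p \<circ> q \<in> ?T" if "p \<in> ?T" "q \<in> ?T" for p q
    using generate.eng[OF that] by (simp add: sym_group_mult)
  have t12: "transpose 1 2 \<in> ?T" and t23: "transpose 2 3 \<in> ?T"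
    by (simp_all add: generate.incl)
  have "transpose (1::nat) 3 = transpose 1 2 \<circ> transpose 2 3 \<circ> transpose 1 2"
    by (auto simp: fun_eq_iff transpose_def)
  then have t13: "transpose 1 3 \<in> ?T"
    using closed[OF closed[OF t12 t23] t12] by simp
  have transpositions: "transpose a b \<in> ?T" if "a \<in> {1..3}" "b \<in> {1..3}" "a \<noteq> b" for a b :: nat
  proof -
    have t21: "transpose 2 1 \<in> ?T" and t32: "transpose 3 2 \<in> ?T" and t31: "transpose 3 1 \<in> ?T"
      using t12 t23 t13
      by (simp_all only: transpose_commute[of 2 1] transpose_commute[of 3 2] transpose_commute[of 3 1])
    from that have "a = 1 \<or> a = 2 \<or> a = 3" "b = 1 \<or> b = 2 \<or> b = 3"
      by auto
    with \<open>a \<noteq> b\<close> show ?thesis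
      using t12 t23 t13 t21 t32 t31 by auto
  qed
  show "carrier (sym_group 3) \<subseteq> ?T"
  proof
    fix p assume "p \<in> carrier (sym_group 3)"
    then have "p permutes {1..3}" by (simp add: sym_group_carrier)
    have "finite {1..3::nat}" by simp
    with \<open>p permutes {1..3}\<close> show "p \<in> ?T"
    proof (induction rule: permutes_induct)
      case id
      show ?case using generate.one[of "sym_group 3"] by (simp only: sym_group_one)
    next
      case (swap a b p)
      then show ?case using closed transpositions by blast
    qed
  qed
qed

lemma conjugation_hom:
  fixes \<phi> :: "'a \<Rightarrow> 'a"
  assumes "bij \<phi>"
  shows "(\<lambda>f. \<phi> \<circ> f \<circ> inv' \<phi>) \<in> hom (BijGroup UNIV) (BijGroup UNIV)"
proof (rule homI)
  fix f :: "'a \<Rightarrow> 'a" assume "f \<in> carrier (BijGroup UNIV)"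
  then show "\<phi> \<circ> f \<circ> inv' \<phi> \<in> carrier (BijGroup UNIV)"
    using assms by (simp add: bij_comp bij_imp_bij_inv)
next
  fix f g :: "'a \<Rightarrow> 'a" assume "f \<in> carrier (BijGroup UNIV)" "g \<in> carrier (BijGroup UNIV)"
  then show "\<phi> \<circ> (f \<otimes>\<^bsub>BijGroup UNIV\<^esub> g) \<circ> inv' \<phi> =
      (\<phi> \<circ> f \<circ> inv' \<phi>) \<otimes>\<^bsub>BijGroup UNIV\<^esub> (\<phi> \<circ> g \<circ> inv' \<phi>)"
    using assms by (simp add: bij_comp bij_imp_bij_inv bij_is_inj fun_eq_iff)
qed

lemma inj_conjugation:
  fixes \<phi> :: "'a \<Rightarrow> 'a"
  assumes "bij \<phi>"
  shows "inj (\<lambda>f. \<phi> \<circ> f \<circ> inv' \<phi>)"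
proof (rule injI)
  fix f g :: "'a \<Rightarrow> 'a" assume "\<phi> \<circ> f \<circ> inv' \<phi> = \<phi> \<circ> g \<circ> inv' \<phi>"
  then have "inv' \<phi> \<circ> (\<phi> \<circ> f \<circ> inv' \<phi>) \<circ> \<phi> = inv' \<phi> \<circ> (\<phi> \<circ> g \<circ> inv' \<phi>) \<circ> \<phi>"
    by simp
  then show "f = g"
    using assms by (simp add: o_assoc bij_is_inj bij_is_surj surj_iff)
qed

definition coord :: "'a \<times> 'a \<times> 'a \<Rightarrow> nat \<Rightarrow> 'a" where
  "coord v i = (if i = 1 then fst v else if i = 2 then fst (snd v) else snd (snd v))"

(* The inverse makes this a left action, so that permute_coords is a homomorphism. *)
definition permute_coords :: "(nat \<Rightarrow> nat) \<Rightarrow> 'a \<times> 'a \<times> 'a \<Rightarrow> 'a \<times> 'a \<times> 'a" where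
  "permute_coords \<sigma> v = (coord v (inv' \<sigma> 1), coord v (inv' \<sigma> 2), coord v (inv' \<sigma> 3))"

lemma coord_permute_coords:
  assumes "i \<in> {1..3}"
  shows "coord (permute_coords \<sigma> v) i = coord v (inv' \<sigma> i)"
proof -
  from assms have "i = 1 \<or> i = 2 \<or> i = 3" by auto
  then show ?thesis by (auto simp: coord_def permute_coords_def)
qed

lemma permute_coords_comp:
  assumes "\<sigma> permutes {1..3}" "\<tau> permutes {1..3}"
  shows "permute_coords (\<sigma> \<circ> \<tau>) = permute_coords \<sigma> \<circ> permute_coords \<tau>"
proof
  fix v :: "'a \<times> 'a \<times> 'a"
  have "coord (permute_coords \<tau> v) (inv' \<sigma> i) = coord v (inv' (\<sigma> \<circ> \<tau>) i)" if "i \<in> {1..3}" for i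
    using that assms permutes_in_image[OF permutes_inv[OF assms(1)]]
    by (simp add: coord_permute_coords o_inv_distrib permutes_bij)
  then show "permute_coords (\<sigma> \<circ> \<tau>) v = (permute_coords \<sigma> \<circ> permute_coords \<tau>) v"
    by (simp add: permute_coords_def)
qed

lemma permute_coords_id: "permute_coords id = id"
  by (auto simp: fun_eq_iff permute_coords_def coord_def)

lemma bij_permute_coords:
  assumes \<sigma>: "\<sigma> permutes {1..3}"
  shows "bij (permute_coords \<sigma> :: 'a \<times> 'a \<times> 'a \<Rightarrow> _)"
proof (rule o_bij)
  show "permute_coords (inv' \<sigma>) \<circ> permute_coords \<sigma> = (id :: 'a \<times> 'a \<times> 'a \<Rightarrow> _)"
    using permute_coords_comp[where 'a = 'a, OF permutes_inv[OF \<sigma>] \<sigma>]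
    by (simp add: permutes_inv_o[OF \<sigma>] permute_coords_id)
  show "permute_coords \<sigma> \<circ> permute_coords (inv' \<sigma>) = (id :: 'a \<times> 'a \<times> 'a \<Rightarrow> _)"
    using permute_coords_comp[where 'a = 'a, OF \<sigma> permutes_inv[OF \<sigma>]]
    by (simp add: permutes_inv_o[OF \<sigma>] permute_coords_id)
qed

lemma permute_coords_hom: "permute_coords \<in> hom (sym_group 3) (BijGroup UNIV)"
  by (rule homI) (simp_all add: sym_group_carrier sym_group_mult bij_permute_coords permute_coords_comp)

lemma coord_of_nat:
  assumes "i \<in> {1..3}"
  shows "coord (1, 2, 3) i = of_nat i"
proof -
  from assms have "i = 1 \<or> i = 2 \<or> i = 3" by auto
  then show ?thesis by (auto simp: coord_def)
qed

lemma inj_on_permute_coords: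
  "inj_on (permute_coords :: _ \<Rightarrow> 'a::semiring_char_0 \<times> 'a \<times> 'a \<Rightarrow> _) (carrier (sym_group 3))"
proof (rule inj_onI)
  fix \<sigma> \<tau> :: "nat \<Rightarrow> nat"
  assume "\<sigma> \<in> carrier (sym_group 3)" "\<tau> \<in> carrier (sym_group 3)"
  then have \<sigma>: "inv' \<sigma> permutes {1..3}" and \<tau>: "inv' \<tau> permutes {1..3}"
    by (simp_all add: sym_group_carrier permutes_inv)
  assume "(permute_coords \<sigma> :: 'a \<times> 'a \<times> 'a \<Rightarrow> _) = permute_coords \<tau>"
  then have "coord (permute_coords \<sigma> (1, 2, 3 :: 'a)) i = coord (permute_coords \<tau> (1, 2, 3 :: 'a)) i" for i
    by simp
  moreover have "coord (permute_coords \<rho> (1, 2, 3 :: 'a)) i = of_nat (inv' \<rho> i)"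
    if "inv' \<rho> permutes {1..3}" "i \<in> {1..3}" for \<rho> i
    using that by (metis coord_permute_coords coord_of_nat permutes_in_image)
  ultimately have "(of_nat (inv' \<sigma> i) :: 'a) = of_nat (inv' \<tau> i)" if "i \<in> {1..3}" for i
    using that \<sigma> \<tau> by metis
  then have "inv' \<sigma> i = inv' \<tau> i" for i
    by (cases "i \<in> {1..3}") (simp_all add: permutes_not_in[OF \<sigma>] permutes_not_in[OF \<tau>])
  then have "inv' \<sigma> = inv' \<tau>" ..
  with \<open>\<sigma> \<in> carrier (sym_group 3)\<close> \<open>\<tau> \<in> carrier (sym_group 3)\<close> show "\<sigma> = \<tau>"
    by (metis permutes_inv_inv sym_group_carrier)
qed

definition V_args_map :: "nat \<Rightarrow> complex \<times> complex \<times> complex \<Rightarrow> complex \<times> complex \<times> complex" where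
  "V_args_map n = (\<lambda>(x, y, z). V_args n x y z)"

lemma bij_V_args_map: "bij (V_args_map n)"
proof (rule o_bij)
  define inverse :: "complex \<times> complex \<times> complex \<Rightarrow> complex \<times> complex \<times> complex" where
    "inverse = (\<lambda>(a, b, c). let x = (2 * b - 2 + of_nat n - a) / 2; z = (2 * x - a - 2 * c - of_nat n) / 4
                           in (x, x - a - z, z))"
  show "inverse \<circ> V_args_map n = id" "V_args_map n \<circ> inverse = id"
    by (auto simp: fun_eq_iff inverse_def V_args_map_def V_args_def Let_def field_simps)
qed

lemma V_args_map_transpose:
  "V_args_map n \<circ> permute_coords (transpose 2 3) = T1 n \<circ> V_args_map n"
  "V_args_map n \<circ> permute_coords (transpose 1 2) = T2 \<circ> V_args_map n"
  by (auto simp: fun_eq_iff V_args_map_def permute_coords_def coord_def T1_V_args T2_V_args)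

definition V_action :: "nat \<Rightarrow> (nat \<Rightarrow> nat) \<Rightarrow> complex \<times> complex \<times> complex \<Rightarrow> complex \<times> complex \<times> complex" where
  "V_action n \<sigma> = V_args_map n \<circ> permute_coords \<sigma> \<circ> inv' (V_args_map n)"

lemma V_action_eqI:
  assumes "V_args_map n \<circ> permute_coords \<sigma> = f \<circ> V_args_map n"
  shows "V_action n \<sigma> = f"
proof -
  have "V_action n \<sigma> = f \<circ> (V_args_map n \<circ> inv' (V_args_map n))"
    by (simp add: V_action_def assms comp_assoc)
  also have "V_args_map n \<circ> inv' (V_args_map n) = id"
    using bij_is_surj[OF bij_V_args_map] by (simp only: surj_iff)
  finally show ?thesis by simp
qed

lemma V_action_transpose: "V_action n (transpose 2 3) = T1 n" "V_action n (transpose 1 2) = T2"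
  by (rule V_action_eqI, rule V_args_map_transpose)+

lemma Tgroup_iso_sym_group: "Tgroup n \<cong> sym_group 3"
proof -
  have action: "V_action n = (\<lambda>f. V_args_map n \<circ> f \<circ> inv' (V_args_map n)) \<circ> permute_coords"
    by (simp add: fun_eq_iff V_action_def)
  have hom: "V_action n \<in> hom (sym_group 3) (BijGroup UNIV)"
    unfolding action using permute_coords_hom conjugation_hom[OF bij_V_args_map] by (rule hom_compose)
  have inj: "inj_on (V_action n) (carrier (sym_group 3))"
    unfolding action using inj_on_permute_coords inj_conjugation[OF bij_V_args_map]
    by (rule comp_inj_on[OF _ inj_on_subset]) simp
  have generators: "{transpose 1 2, transpose 2 3} \<subseteq> carrier (sym_group 3)"
    by (simp add: sym_group_carrier permutes_swap_id)
  from iso_generate_image[OF sym_group_is_group group_BijGroup hom inj generators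
      sym_group_3_generated_by_transpositions]
  show ?thesis
    unfolding Tgroup_def image_insert image_empty V_action_transpose by (simp add: insert_commute)
qed

theorem mainTheorem12:
  fixes n :: nat
  shows "Tgroup n \<cong> sym_group 3 \<and>
    (\<forall>a b c. R_defined n a b c \<longrightarrow>
      (R_defined n a b (a - c - of_nat n) \<longrightarrow>
         R n a b c = R n a b (a - c - of_nat n)) \<and>
      (R_defined n (1 + c - b) (1 + c - a) c \<longrightarrow>
         R n a b c = R n (1 + c - b) (1 + c - a) c) \<and>
      (R_defined n (1 + c - b) (1 + c - a) (1 - b - of_nat n) \<longrightarrow>
         R n a b c = R n (1 + c - b) (1 + c - a) (1 - b - of_nat n)) \<and>
      (R_defined n (1 + a - b - c - of_nat n) (1 - c - of_nat n) (a - c - of_nat n) \<longrightarrow>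
         R n a b c = R n (1 + a - b - c - of_nat n) (1 - c - of_nat n) (a - c - of_nat n)) \<and>
      (R_defined n (1 + a - b - c - of_nat n) (1 - c - of_nat n) (1 - b - of_nat n) \<longrightarrow>
         R n a b c = R n (1 + a - b - c - of_nat n) (1 - c - of_nat n) (1 - b - of_nat n))) \<and>
    (\<forall>x y z. V_defined n x y z \<longrightarrow>
      (V_defined n y x z \<longrightarrow> V n x y z = V n y x z) \<and>
      (V_defined n x z y \<longrightarrow> V n x y z = V n x z y) \<and>
      (V_defined n z y x \<longrightarrow> V n x y z = V n z y x) \<and>
      (V_defined n y z x \<longrightarrow> V n x y z = V n y z x) \<and>
      (V_defined n z x y \<longrightarrow> V n x y z = V n z x y))"
  using Tgroup_iso_sym_group R_invariances V_symmetric by blast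

end
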